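(* Let $\beta>0$, let $\tilde r_h\in\mathbb{R}^{\mathcal{S}\times\mathcal{A}}$ for $h\in[H]$, and let $d^t=(d^t_1,\dots,d^t_H)$ be a feasible occupancy measure with policies $\pi^t_h=\pi_{d^t_h}$. Let $$d^{t+1}=\arg\max_{d\in\Delta^H}\ \sum_{h=1}^H\Big(\langle d_h,\tilde r_h\rangle-\tfrac1\beta\sum_{h'=1}^h\mathcal{H}(d_{h'},d^t_{h'})\Big)\quad\text{s.t.}\quad E^Td_1=\nu_1,\ \ E^Td_h=F^Td_{h-1}\ \ \forall h\in\{2,\dots,H\}.$$ Then the policy $\pi^{t+1}_h=\pi_{d^{t+1}_h}$ with occupancy measure $d^{t+1}_h$ satisfies $$\pi^{t+1}_h(a|s)\ \propto\ \pi^t_h(a|s)\exp\Big(\frac{\beta}{H-h+1}Q^t_h(s,a)\Big),$$ where $Q^t_h$ and $V^t_h$ satisfy the recursion $V^t_{H+1}\equiv0$, $$Q^t_h=\tilde r_h+FV^t_{h+1},\qquad V^t_h(s)=\frac{H-h+1}{\beta}\log\sum_a\pi^t_h(a|s)\exp\Big(\frac{\beta}{H-h+1}Q^t_h(s,a)\Big).$$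
   Context: Finite state space $\mathcal{S}$, finite action space $\mathcal{A}$, horizon $H$, transition kernel $f$, initial distribution $\nu_1$. $\Delta^H$ is the $H$-fold product of the simplex $\Delta_{\mathcal{S}\times\mathcal{A}}$. $(E^Td)(s)=\sum_ad(s,a)$; $(F^Td)(s')=\sum_{s,a}f(s'|s,a)d(s,a)$; $(Fz)(s,a)=\sum_{s'}f(s'|s,a)z(s')$. For $d\in\Delta_{\mathcal{S}\times\mathcal{A}}$, $\pi_d(a|s)=d(s,a)/\sum_{a'}d(s,a')$. Conditional relative entropy: $\mathcal{H}(d,d')=\sum_{s,a}d(s,a)\log\frac{\pi_d(a|s)}{\pi_{d'}(a|s)}$. *)

theory Defs
  imports Complex_Main
begin

text \<open>The transition kernel is f :: 's => 's * 'a => real, with f s' (s,a) = f(s'|s,a).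
  Occupancy measures are d :: nat => 's * 'a => real, indexed by h in {1..H}.\<close>

definition simplex :: "('b::finite \<Rightarrow> real) set" where
  "simplex = {p. (\<forall>x. 0 \<le> p x) \<and> (\<Sum>x\<in>UNIV. p x) = 1}"

definition ET :: "('s \<times> 'a::finite \<Rightarrow> real) \<Rightarrow> 's \<Rightarrow> real" where
  "ET d s = (\<Sum>a\<in>UNIV. d (s, a))"

definition FT :: "('s \<Rightarrow> 's \<times> 'a \<Rightarrow> real) \<Rightarrow> ('s::finite \<times> 'a::finite \<Rightarrow> real) \<Rightarrow> 's \<Rightarrow> real" where
  "FT f d s' = (\<Sum>sa\<in>UNIV. f s' sa * d sa)"

definition Fop :: "('s::finite \<Rightarrow> 's \<times> 'a \<Rightarrow> real) \<Rightarrow> ('s \<Rightarrow> real) \<Rightarrow> 's \<times> 'a \<Rightarrow> real" where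
  "Fop f z sa = (\<Sum>s'\<in>UNIV. f s' sa * z s')"

definition pol :: "('s \<times> 'a::finite \<Rightarrow> real) \<Rightarrow> 's \<Rightarrow> 'a \<Rightarrow> real" where
  "pol d s a = d (s, a) / (\<Sum>a'\<in>UNIV. d (s, a'))"

definition cond_rel_ent :: "('s::finite \<times> 'a::finite \<Rightarrow> real) \<Rightarrow> ('s \<times> 'a \<Rightarrow> real) \<Rightarrow> real" where
  "cond_rel_ent d d' = (\<Sum>sa\<in>UNIV. d sa * ln (pol d (fst sa) (snd sa) / pol d' (fst sa) (snd sa)))"

definition feasible_occ :: "('s::finite \<Rightarrow> 's \<times> 'a::finite \<Rightarrow> real) \<Rightarrow> ('s \<Rightarrow> real) \<Rightarrow> nat
    \<Rightarrow> (nat \<Rightarrow> 's \<times> 'a \<Rightarrow> real) \<Rightarrow> bool" where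
  "feasible_occ f \<nu> H d \<longleftrightarrow>
     (\<forall>h\<in>{1..H}. d h \<in> simplex) \<and> ET (d 1) = \<nu> \<and>
     (\<forall>h\<in>{2..H}. ET (d h) = FT f (d (h - 1)))"

definition objective :: "real \<Rightarrow> nat \<Rightarrow> (nat \<Rightarrow> 's::finite \<times> 'a::finite \<Rightarrow> real)
    \<Rightarrow> (nat \<Rightarrow> 's \<times> 'a \<Rightarrow> real) \<Rightarrow> (nat \<Rightarrow> 's \<times> 'a \<Rightarrow> real) \<Rightarrow> real" where
  "objective \<beta> H r dt d =
     (\<Sum>h=1..H. (\<Sum>sa\<in>UNIV. d h sa * r h sa)
                - (1 / \<beta>) * (\<Sum>h'=1..h. cond_rel_ent (d h') (dt h')))"

end

theory Submission
  imports Defs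
begin

(* Let g_h(a|s) be proportional to pi^t_h(a|s) exp (beta/(H-h+1) Q_h(s,a)). Its normaliser is
   exp (beta/(H-h+1) V_h(s)), so after regrouping the nested entropy sums (stage h carries weight
   (H-h+1)/beta) the stage-h term of the objective equals <E^T d_h, V_h> - <d_h, F V_{h+1}> minus
   (H-h+1)/beta times the conditional divergence of pi_{d_h} from g_h. The flow constraints turn
   <d_h, F V_{h+1}> into <E^T d_{h+1}, V_{h+1}>, so the objective telescopes to
     <nu, V_1> - sum_h (H-h+1)/beta * KL(pi_{d_h} || g_h | E^T d_h).
   By Gibbs' inequality the divergences are nonnegative and vanish iff pi_{d_h} = g_h on the
   support of E^T d_h. The occupancy measure generated by the policies g_h is feasible and attains
   <nu, V_1>; hence so does every maximiser, which forces pi^{t+1}_h = g_h. *)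

lemma simplexD: "p \<in> simplex \<Longrightarrow> 0 \<le> p x" "p \<in> simplex \<Longrightarrow> (\<Sum>x\<in>UNIV. p x) = 1"
  by (auto simp: simplex_def)

lemma sum_UNIV_prod:
  "(\<Sum>sa\<in>(UNIV::('s::finite \<times> 'a::finite) set). F sa) = (\<Sum>s\<in>UNIV. \<Sum>a\<in>UNIV. F (s, a))"
  using sum.cartesian_product[of "\<lambda>s a. F (s, a)" UNIV UNIV] by (simp add: case_prod_beta')

lemma sum_ET_mult:
  "(\<Sum>s\<in>UNIV. ET d s * X s) = (\<Sum>sa\<in>(UNIV::('s::finite \<times> 'a::finite) set). d sa * X (fst sa))"
  by (simp add: sum_UNIV_prod ET_def sum_distrib_right)

lemma le_ET: "\<forall>sa. 0 \<le> d sa \<Longrightarrow> d (s, a) \<le> ET d s"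
  unfolding ET_def by (rule member_le_sum[where f = "\<lambda>a. d (s, a)"]) auto

lemma ET_nonneg: "\<forall>sa. 0 \<le> d sa \<Longrightarrow> 0 \<le> ET d s"
  unfolding ET_def by (simp add: sum_nonneg)

lemma pol_eq_div_ET: "pol d s a = d (s, a) / ET d s"
  by (simp add: pol_def ET_def)

lemma ET_mult_pol: "\<forall>sa. 0 \<le> d sa \<Longrightarrow> ET d s * pol d s a = d (s, a)"
  using le_ET[of d s a] by (cases "ET d s = 0") (auto simp: pol_eq_div_ET intro: antisym)

lemma pol_pos: "\<forall>sa. 0 \<le> d sa \<Longrightarrow> 0 < d (s, a) \<Longrightarrow> 0 < pol d s a"
  using le_ET[of d s a] by (simp add: pol_eq_div_ET)

lemma pol_in_simplex: "\<forall>sa. 0 \<le> d sa \<Longrightarrow> 0 < ET d s \<Longrightarrow> pol d s \<in> simplex"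
  by (auto simp: simplex_def pol_eq_div_ET sum_divide_distrib[symmetric] ET_def[symmetric])

lemma sum_mult_Fop: "(\<Sum>sa\<in>UNIV. d sa * Fop f z sa) = (\<Sum>s'\<in>UNIV. FT f d s' * z s')"
proof -
  have "(\<Sum>sa\<in>UNIV. d sa * Fop f z sa) = (\<Sum>sa\<in>UNIV. \<Sum>s'\<in>UNIV. f s' sa * d sa * z s')"
    unfolding Fop_def by (simp add: sum_distrib_left mult_ac)
  also have "\<dots> = (\<Sum>s'\<in>UNIV. FT f d s' * z s')"
    unfolding FT_def by (subst sum.swap) (simp add: sum_distrib_right)
  finally show ?thesis .
qed

lemma mult_ln_div_ge:
  fixes x y :: real
  assumes "0 \<le> x" "0 < y"
  shows "x - y \<le> x * ln (x / y)"
    and "x * ln (x / y) = x - y \<longleftrightarrow> x = y"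
proof -
  consider "x = 0" | "0 < x" using assms by linarith
  then have "x - y \<le> x * ln (x / y) \<and> (x * ln (x / y) = x - y \<longleftrightarrow> x = y)"
  proof cases
    case 1
    then show ?thesis using assms by auto
  next
    case 2
    define t where "t = y / x"
    have t: "0 < t" using 2 assms by (simp add: t_def)
    have ln_t: "x * ln (x / y) = - x * ln t" and xt: "x * t = y"
      using 2 assms by (simp_all add: t_def ln_div algebra_simps)
    have "x * ln t \<le> x * (t - 1)"
      using ln_le_minus_one[OF t] 2 by (simp add: mult_left_mono)
    moreover have "x * ln t = x * (t - 1) \<longleftrightarrow> t = 1"
      using ln_eq_minus_one[OF t] 2 by auto
    ultimately show ?thesis
      using 2 xt unfolding ln_t by (auto simp: algebra_simps t_def)
  qed
  then show "x - y \<le> x * ln (x / y)" and "x * ln (x / y) = x - y \<longleftrightarrow> x = y"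
    by auto
qed

definition kl_div :: "('b::finite \<Rightarrow> real) \<Rightarrow> ('b \<Rightarrow> real) \<Rightarrow> real" where
  "kl_div p q = (\<Sum>x\<in>UNIV. p x * ln (p x / q x))"

lemma kl_div_nonneg_and_eq_0_iff:
  assumes p: "p \<in> simplex" and q: "q \<in> simplex" and q_pos: "\<forall>x. 0 < q x"
  shows "0 \<le> kl_div p q" and "kl_div p q = 0 \<longleftrightarrow> p = q"
proof -
  define e where "e x = p x * ln (p x / q x) - (p x - q x)" for x
  have e_nonneg: "0 \<le> e x" for x
    using mult_ln_div_ge(1)[of "p x" "q x"] simplexD(1)[OF p] q_pos by (simp add: e_def)
  have e_eq_0: "e x = 0 \<longleftrightarrow> p x = q x" for x
    using mult_ln_div_ge(2)[of "p x" "q x"] simplexD(1)[OF p] q_pos by (auto simp: e_def)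
  have "kl_div p q = sum e UNIV"
    using simplexD(2)[OF p] simplexD(2)[OF q] by (simp add: e_def kl_div_def sum_subtractf)
  then show "0 \<le> kl_div p q" and "kl_div p q = 0 \<longleftrightarrow> p = q"
    using e_nonneg sum_nonneg_eq_0_iff[of UNIV e] by (auto simp: e_eq_0 fun_eq_iff intro: sum_nonneg)
qed

definition cond_kl :: "('s::finite \<times> 'a::finite \<Rightarrow> real) \<Rightarrow> ('s \<Rightarrow> 'a \<Rightarrow> real) \<Rightarrow> real" where
  "cond_kl d g = (\<Sum>sa\<in>UNIV. d sa * ln (pol d (fst sa) (snd sa) / g (fst sa) (snd sa)))"

lemma cond_kl_eq_sum_ET_kl_div:
  assumes "\<forall>sa. 0 \<le> d sa"
  shows "cond_kl d g = (\<Sum>s\<in>UNIV. ET d s * kl_div (pol d s) (g s))"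
  unfolding cond_kl_def kl_div_def sum_UNIV_prod
  by (simp add: sum_distrib_left mult.assoc[symmetric] ET_mult_pol[OF assms])

lemma cond_kl_nonneg_and_eq_0_iff:
  fixes d :: "'s::finite \<times> 'a::finite \<Rightarrow> real"
  assumes d: "\<forall>sa. 0 \<le> d sa" and g: "\<forall>s. g s \<in> simplex" and g_pos: "\<forall>s a. 0 < g s a"
  shows "0 \<le> cond_kl d g" and "cond_kl d g = 0 \<longleftrightarrow> (\<forall>s. 0 < ET d s \<longrightarrow> pol d s = g s)"
proof -
  define e where "e s = ET d s * kl_div (pol d s) (g s)" for s
  have kl: "0 < ET d s \<Longrightarrow> 0 \<le> kl_div (pol d s) (g s) \<and> (kl_div (pol d s) (g s) = 0 \<longleftrightarrow> pol d s = g s)"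
    for s using kl_div_nonneg_and_eq_0_iff[OF pol_in_simplex[OF d] g[rule_format]] g_pos by blast
  have ET_cases: "ET d s = 0 \<or> 0 < ET d s" for s
    using ET_nonneg[OF d, of s] by linarith
  have e_nonneg: "0 \<le> e s" for s
    using ET_cases[of s] kl[of s] by (auto simp: e_def)
  have e_eq_0: "e s = 0 \<longleftrightarrow> (0 < ET d s \<longrightarrow> pol d s = g s)" for s
    using ET_cases[of s] kl[of s] by (auto simp: e_def)
  have "cond_kl d g = sum e UNIV"
    by (simp add: cond_kl_eq_sum_ET_kl_div[OF d] e_def)
  then show "0 \<le> cond_kl d g" and "cond_kl d g = 0 \<longleftrightarrow> (\<forall>s. 0 < ET d s \<longrightarrow> pol d s = g s)"
    using e_nonneg sum_nonneg_eq_0_iff[of UNIV e] by (auto simp: e_eq_0 intro: sum_nonneg)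
qed

definition gibbs_pol :: "('s \<Rightarrow> 'a::finite \<Rightarrow> real) \<Rightarrow> real \<Rightarrow> ('s \<times> 'a \<Rightarrow> real) \<Rightarrow> 's \<Rightarrow> 'a \<Rightarrow> real" where
  "gibbs_pol p k q s a = p s a * exp (k * q (s, a)) / (\<Sum>a'\<in>UNIV. p s a' * exp (k * q (s, a')))"

lemma gibbs_pol_proportional: "\<exists>c. \<forall>a. gibbs_pol p k q s a = c * (p s a * exp (k * q (s, a)))"
  unfolding gibbs_pol_def
  by (rule exI[where x = "1 / (\<Sum>a'\<in>UNIV. p s a' * exp (k * q (s, a')))"]) simp

lemma gibbs_pol_pos_and_in_simplex:
  assumes "\<forall>a. 0 < p s a"
  shows "0 < gibbs_pol p k q s a" and "gibbs_pol p k q s \<in> simplex"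
proof -
  have Z: "0 < (\<Sum>a'\<in>UNIV. p s a' * exp (k * q (s, a')))"
    using assms by (intro sum_pos) auto
  then show "0 < gibbs_pol p k q s a"
    using assms by (simp add: gibbs_pol_def)
  show "gibbs_pol p k q s \<in> simplex"
    using Z assms unfolding simplex_def gibbs_pol_def
    by (auto simp: sum_divide_distrib[symmetric] less_imp_le)
qed

lemma cond_kl_gibbs_pol:
  fixes d :: "'s::finite \<times> 'a::finite \<Rightarrow> real"
  assumes d: "\<forall>sa. 0 \<le> d sa" and p_pos: "\<forall>s a. 0 < p s a"
  shows "cond_kl d (gibbs_pol p k q) = cond_kl d p - k * (\<Sum>sa\<in>UNIV. d sa * q sa)
           + (\<Sum>s\<in>UNIV. ET d s * ln (\<Sum>a\<in>UNIV. p s a * exp (k * q (s, a))))"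
proof -
  define Z where "Z s = (\<Sum>a\<in>UNIV. p s a * exp (k * q (s, a)))" for s
  have Z_pos: "0 < Z s" for s
    unfolding Z_def using p_pos by (intro sum_pos) auto
  have pointwise: "d sa * ln (pol d (fst sa) (snd sa) / gibbs_pol p k q (fst sa) (snd sa))
      = d sa * ln (pol d (fst sa) (snd sa) / p (fst sa) (snd sa)) - k * (d sa * q sa)
        + d sa * ln (Z (fst sa))" for sa
  proof (cases "d sa = 0")
    case False
    obtain s a where sa: "sa = (s, a)" by fastforce
    have "0 < pol d s a" using False d pol_pos[OF d] by (simp add: sa order_less_le)
    then have "ln (pol d s a / gibbs_pol p k q s a) = ln (pol d s a / p s a) - k * q (s, a) + ln (Z s)"
      using p_pos[rule_format, of s a] Z_pos[of s]
      by (simp add: gibbs_pol_def Z_def[symmetric] ln_div ln_mult)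
    then show ?thesis by (simp add: sa right_diff_distrib distrib_left)
  qed simp
  show ?thesis
    unfolding cond_kl_def pointwise
    by (simp add: sum.distrib sum_subtractf sum_distrib_left sum_ET_mult Z_def)
qed

lemma sum_atLeastAtMost_nested:
  fixes e :: "nat \<Rightarrow> real"
  shows "(\<Sum>h=1..H. \<Sum>h'=1..h. e h') = (\<Sum>h=1..H. real (H - h + 1) * e h)"
proof (induction H)
  case (Suc H)
  have "(\<Sum>h=1..H. real (Suc H - h + 1) * e h) = (\<Sum>h=1..H. real (H - h + 1) * e h + e h)"
    by (rule sum.cong) (auto simp: Suc_diff_le algebra_simps)
  then show ?case
    using Suc by (simp add: sum.distrib)
qed simp

lemma objective_eq_weighted_cond_kl:
  "objective \<beta> H r dt d = (\<Sum>h=1..H. (\<Sum>sa\<in>UNIV. d h sa * r h sa)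
      - real (H - h + 1) / \<beta> * cond_kl (d h) (pol (dt h)))"
proof -
  have "objective \<beta> H r dt d = (\<Sum>h=1..H. \<Sum>sa\<in>UNIV. d h sa * r h sa)
      - 1 / \<beta> * (\<Sum>h=1..H. \<Sum>h'=1..h. cond_kl (d h') (pol (dt h')))"
    unfolding objective_def cond_rel_ent_def cond_kl_def by (simp add: sum_subtractf sum_distrib_left)
  also have "\<dots> = (\<Sum>h=1..H. \<Sum>sa\<in>UNIV. d h sa * r h sa)
      - 1 / \<beta> * (\<Sum>h=1..H. real (H - h + 1) * cond_kl (d h) (pol (dt h)))"
    by (simp only: sum_atLeastAtMost_nested)
  finally show ?thesis
    by (simp add: sum_subtractf sum_distrib_left)
qed

lemma objective_eq_value_minus_cond_kl:
  fixes f :: "'s::finite \<Rightarrow> 's \<times> 'a::finite \<Rightarrow> real"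
    and dt d Q :: "nat \<Rightarrow> 's \<times> 'a \<Rightarrow> real" and V :: "nat \<Rightarrow> 's \<Rightarrow> real"
  assumes beta_pos: "\<beta> > 0"
    and d_feas: "feasible_occ f \<nu> H d"
    and dt_pos: "\<forall>h\<in>{1..H}. \<forall>sa. dt h sa > 0"
    and V_last: "\<forall>s. V (H + 1) s = 0"
    and Q_rec: "\<forall>h\<in>{1..H}. \<forall>sa. Q h sa = r h sa + Fop f (V (h + 1)) sa"
    and V_rec: "\<forall>h\<in>{1..H}. \<forall>s. V h s =
        (real (H - h + 1) / \<beta>) *
          ln (\<Sum>a\<in>UNIV. pol (dt h) s a * exp (\<beta> / real (H - h + 1) * Q h (s, a)))"
  shows "objective \<beta> H r dt d = (\<Sum>s\<in>UNIV. \<nu> s * V 1 s)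
     - (\<Sum>h=1..H. real (H - h + 1) / \<beta> *
          cond_kl (d h) (gibbs_pol (pol (dt h)) (\<beta> / real (H - h + 1)) (Q h)))"
proof -
  define v where "v h = (\<Sum>s\<in>UNIV. ET (d h) s * V h s)" for h
  have step: "(\<Sum>sa\<in>UNIV. d h sa * r h sa) - real (H - h + 1) / \<beta> * cond_kl (d h) (pol (dt h))
      = v h - v (Suc h)
        - real (H - h + 1) / \<beta> * cond_kl (d h) (gibbs_pol (pol (dt h)) (\<beta> / real (H - h + 1)) (Q h))"
    if h: "h \<in> {1..H}" for h
  proof -
    define k where "k = \<beta> / real (H - h + 1)"
    have k: "0 < k" "real (H - h + 1) / \<beta> = 1 / k"
      using beta_pos by (simp_all add: k_def)
    have d_nonneg: "\<forall>sa. 0 \<le> d h sa"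
      using d_feas h by (auto simp: feasible_occ_def simplex_def)
    have pol_dt_pos: "\<forall>s a. 0 < pol (dt h) s a"
      using dt_pos h by (auto intro!: pol_pos less_imp_le)
    have log_partition: "(\<Sum>s\<in>UNIV. ET (d h) s * ln (\<Sum>a\<in>UNIV. pol (dt h) s a * exp (k * Q h (s, a))))
        = k * v h"
    proof -
      have "ln (\<Sum>a\<in>UNIV. pol (dt h) s a * exp (k * Q h (s, a))) = k * V h s" for s
        using V_rec h beta_pos by (simp add: k_def)
      then show ?thesis
        by (simp add: v_def sum_distrib_left mult.left_commute)
    qed
    have flow: "(\<Sum>sa\<in>UNIV. d h sa * Q h sa) - (\<Sum>sa\<in>UNIV. d h sa * r h sa) = v (Suc h)"
    proof -
      have "(\<Sum>sa\<in>UNIV. d h sa * Q h sa) - (\<Sum>sa\<in>UNIV. d h sa * r h sa)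
          = (\<Sum>sa\<in>UNIV. d h sa * Fop f (V (Suc h)) sa)"
        unfolding sum_subtractf[symmetric]
        by (rule sum.cong) (use Q_rec h in \<open>auto simp: algebra_simps\<close>)
      also have "\<dots> = (\<Sum>s'\<in>UNIV. FT f (d h) s' * V (Suc h) s')"
        by (rule sum_mult_Fop)
      also have "\<dots> = v (Suc h)"
      proof (cases "h = H")
        case False
        then have "Suc h \<in> {2..H}" using h by auto
        then show ?thesis
          using d_feas by (fastforce simp: v_def feasible_occ_def)
      qed (use V_last in \<open>simp add: v_def\<close>)
      finally show ?thesis .
    qed
    show ?thesis
      using flow k(1)
      unfolding cond_kl_gibbs_pol[OF d_nonneg pol_dt_pos] log_partition k(2) k_def[symmetric]
      by (simp add: field_simps)
  qed
  have "objective \<beta> H r dt d = (\<Sum>h=1..H. v h - v (Suc h)) - (\<Sum>h=1..H. real (H - h + 1) / \<beta> *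
          cond_kl (d h) (gibbs_pol (pol (dt h)) (\<beta> / real (H - h + 1)) (Q h)))"
    unfolding objective_eq_weighted_cond_kl sum_subtractf[symmetric] by (rule sum.cong[OF refl step])
  also have "(\<Sum>h=1..H. v h - v (Suc h)) = v 1 - v (Suc H)"
    using sum_Suc_diff[of 1 H "\<lambda>h. - v h"] by simp
  also have "v 1 - v (Suc H) = (\<Sum>s\<in>UNIV. \<nu> s * V 1 s)"
    using V_last d_feas by (simp add: v_def feasible_occ_def)
  finally show ?thesis .
qed

lemma objective_le_value:
  fixes f :: "'s::finite \<Rightarrow> 's \<times> 'a::finite \<Rightarrow> real"
    and dt d Q :: "nat \<Rightarrow> 's \<times> 'a \<Rightarrow> real" and V :: "nat \<Rightarrow> 's \<Rightarrow> real"
  assumes beta_pos: "\<beta> > 0"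
    and d_feas: "feasible_occ f \<nu> H d"
    and dt_pos: "\<forall>h\<in>{1..H}. \<forall>sa. dt h sa > 0"
    and V_last: "\<forall>s. V (H + 1) s = 0"
    and Q_rec: "\<forall>h\<in>{1..H}. \<forall>sa. Q h sa = r h sa + Fop f (V (h + 1)) sa"
    and V_rec: "\<forall>h\<in>{1..H}. \<forall>s. V h s =
        (real (H - h + 1) / \<beta>) *
          ln (\<Sum>a\<in>UNIV. pol (dt h) s a * exp (\<beta> / real (H - h + 1) * Q h (s, a)))"
  shows "objective \<beta> H r dt d \<le> (\<Sum>s\<in>UNIV. \<nu> s * V 1 s)"
    and "objective \<beta> H r dt d = (\<Sum>s\<in>UNIV. \<nu> s * V 1 s) \<longleftrightarrow>
      (\<forall>h\<in>{1..H}. \<forall>s. 0 < ET (d h) s \<longrightarrow>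
         pol (d h) s = gibbs_pol (pol (dt h)) (\<beta> / real (H - h + 1)) (Q h) s)"
proof -
  define g where "g h = gibbs_pol (pol (dt h)) (\<beta> / real (H - h + 1)) (Q h)" for h
  define w where "w h = real (H - h + 1) / \<beta>" for h
  have penalty: "0 \<le> w h * cond_kl (d h) (g h)"
      "w h * cond_kl (d h) (g h) = 0 \<longleftrightarrow> (\<forall>s. 0 < ET (d h) s \<longrightarrow> pol (d h) s = g h s)"
    if h: "h \<in> {1..H}" for h
  proof -
    have "\<forall>s a. 0 < pol (dt h) s a"
      using dt_pos h by (auto intro!: pol_pos less_imp_le)
    then have "\<forall>s. g h s \<in> simplex" "\<forall>s a. 0 < g h s a"
      by (simp_all add: g_def gibbs_pol_pos_and_in_simplex)
    moreover have "\<forall>sa. 0 \<le> d h sa"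
      using d_feas h by (auto simp: feasible_occ_def simplex_def)
    ultimately have "0 \<le> cond_kl (d h) (g h)"
      "cond_kl (d h) (g h) = 0 \<longleftrightarrow> (\<forall>s. 0 < ET (d h) s \<longrightarrow> pol (d h) s = g h s)"
      using cond_kl_nonneg_and_eq_0_iff by blast+
    moreover have "0 < w h"
      using beta_pos by (simp add: w_def)
    ultimately show "0 \<le> w h * cond_kl (d h) (g h)"
      "w h * cond_kl (d h) (g h) = 0 \<longleftrightarrow> (\<forall>s. 0 < ET (d h) s \<longrightarrow> pol (d h) s = g h s)"
      by simp_all
  qed
  define P where "P = (\<Sum>h=1..H. w h * cond_kl (d h) (g h))"
  have "0 \<le> P"
    unfolding P_def by (rule sum_nonneg) (rule penalty(1))
  moreover have "P = 0 \<longleftrightarrow> (\<forall>h\<in>{1..H}. \<forall>s. 0 < ET (d h) s \<longrightarrow> pol (d h) s = g h s)"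
    using penalty sum_nonneg_eq_0_iff[of "{1..H}" "\<lambda>h. w h * cond_kl (d h) (g h)"] by (simp add: P_def)
  moreover have "objective \<beta> H r dt d = (\<Sum>s\<in>UNIV. \<nu> s * V 1 s) - P"
    unfolding P_def g_def w_def by (rule objective_eq_value_minus_cond_kl[OF assms])
  ultimately show "objective \<beta> H r dt d \<le> (\<Sum>s\<in>UNIV. \<nu> s * V 1 s)"
    and "objective \<beta> H r dt d = (\<Sum>s\<in>UNIV. \<nu> s * V 1 s) \<longleftrightarrow>
      (\<forall>h\<in>{1..H}. \<forall>s. 0 < ET (d h) s \<longrightarrow>
         pol (d h) s = gibbs_pol (pol (dt h)) (\<beta> / real (H - h + 1)) (Q h) s)"
    unfolding g_def by auto
qed

definition joint :: "('s \<Rightarrow> real) \<Rightarrow> ('s \<Rightarrow> 'a \<Rightarrow> real) \<Rightarrow> 's \<times> 'a \<Rightarrow> real" where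
  "joint m g sa = m (fst sa) * g (fst sa) (snd sa)"

(* state_dist \<nu> f g n is the state distribution at stage n + 1 when the actions of
   stages 1, ..., n are drawn from g 1, ..., g n. *)
fun state_dist :: "('s::finite \<Rightarrow> real) \<Rightarrow> ('s \<Rightarrow> 's \<times> 'a::finite \<Rightarrow> real) \<Rightarrow> (nat \<Rightarrow> 's \<Rightarrow> 'a \<Rightarrow> real)
    \<Rightarrow> nat \<Rightarrow> 's \<Rightarrow> real" where
  "state_dist \<nu> f g 0 = \<nu>"
| "state_dist \<nu> f g (Suc n) = FT f (joint (state_dist \<nu> f g n) (g (Suc n)))"

lemma ET_joint: "\<forall>s. g s \<in> simplex \<Longrightarrow> ET (joint m g) = m"
  by (simp add: fun_eq_iff ET_def joint_def sum_distrib_left[symmetric] simplexD(2))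

lemma joint_in_simplex: "m \<in> simplex \<Longrightarrow> \<forall>s. g s \<in> simplex \<Longrightarrow> joint m g \<in> simplex"
  unfolding simplex_def joint_def by (simp add: sum_UNIV_prod sum_distrib_left[symmetric])

lemma pol_joint: "\<forall>s. g s \<in> simplex \<Longrightarrow> 0 < m s \<Longrightarrow> pol (joint m g) s = g s"
  by (simp add: fun_eq_iff pol_eq_div_ET ET_joint) (simp add: joint_def)

lemma FT_in_simplex:
  assumes kernel: "\<forall>s a. (\<lambda>s'. f s' (s, a)) \<in> simplex" and d: "d \<in> simplex"
  shows "FT f d \<in> simplex"
proof -
  have f: "0 \<le> f s' sa" "(\<Sum>s'\<in>UNIV. f s' sa) = 1" for s' sa
    using kernel by (cases sa; simp add: simplex_def)+
  have "(\<Sum>s'\<in>UNIV. FT f d s') = (\<Sum>sa\<in>UNIV. (\<Sum>s'\<in>UNIV. f s' sa) * d sa)"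
    unfolding FT_def by (subst sum.swap) (simp add: sum_distrib_right)
  then show ?thesis
    using d f by (auto simp: simplex_def FT_def intro: sum_nonneg)
qed

lemma state_dist_in_simplex:
  assumes kernel: "\<forall>s a. (\<lambda>s'. f s' (s, a)) \<in> simplex" and init: "\<nu> \<in> simplex"
    and g: "\<forall>h\<in>{1..H}. \<forall>s. g h s \<in> simplex"
  shows "n < H \<Longrightarrow> state_dist \<nu> f g n \<in> simplex"
proof (induction n)
  case (Suc n)
  then have "state_dist \<nu> f g n \<in> simplex" and "\<forall>s. g (Suc n) s \<in> simplex"
    using g by auto
  then show ?case
    by (simp add: FT_in_simplex[OF kernel] joint_in_simplex)
qed (use init in simp)

lemma rollout_feasible:
  assumes kernel: "\<forall>s a. (\<lambda>s'. f s' (s, a)) \<in> simplex" and init: "\<nu> \<in> simplex"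
    and g: "\<forall>h\<in>{1..H}. \<forall>s. g h s \<in> simplex" and H: "1 \<le> H"
  shows "feasible_occ f \<nu> H (\<lambda>h. joint (state_dist \<nu> f g (h - 1)) (g h))"
proof -
  have "joint (state_dist \<nu> f g (h - 1)) (g h) \<in> simplex" if "h \<in> {1..H}" for h
  proof (rule joint_in_simplex)
    show "state_dist \<nu> f g (h - 1) \<in> simplex"
      using that by (intro state_dist_in_simplex[OF kernel init g]) auto
    show "\<forall>s. g h s \<in> simplex"
      using that g by blast
  qed
  moreover have "ET (joint (state_dist \<nu> f g (1 - 1)) (g 1)) = \<nu>"
  proof -
    have "\<forall>s. g 1 s \<in> simplex" using g H by simp
    then show ?thesis by (simp add: ET_joint)
  qed
  moreover have "ET (joint (state_dist \<nu> f g (h - 1)) (g h))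
      = FT f (joint (state_dist \<nu> f g (h - 1 - 1)) (g (h - 1)))" if "h \<in> {2..H}" for h
  proof -
    have "\<forall>s. g h s \<in> simplex" using g that by simp
    moreover have "h - 1 = Suc (h - 1 - 1)" using that by (simp add: Suc_diff_Suc)
    ultimately show ?thesis by (metis ET_joint state_dist.simps(2))
  qed
  ultimately show ?thesis
    unfolding feasible_occ_def by blast
qed

theorem theorem7:
  fixes f :: "'s::finite \<Rightarrow> 's \<times> 'a::finite \<Rightarrow> real"
    and \<nu> :: "'s \<Rightarrow> real" and H :: nat and \<beta> :: real
    and r :: "nat \<Rightarrow> 's \<times> 'a \<Rightarrow> real"
    and dt dn :: "nat \<Rightarrow> 's \<times> 'a \<Rightarrow> real"
    and Q :: "nat \<Rightarrow> 's \<times> 'a \<Rightarrow> real" and V :: "nat \<Rightarrow> 's \<Rightarrow> real"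
  assumes kernel: "\<forall>s a. (\<lambda>s'. f s' (s, a)) \<in> simplex"
    and init: "\<nu> \<in> simplex"
    and beta_pos: "\<beta> > 0"
    and dt_feas: "feasible_occ f \<nu> H dt"
    and dt_pos: "\<forall>h\<in>{1..H}. \<forall>sa. dt h sa > 0"
    and dn_feas: "feasible_occ f \<nu> H dn"
    and dn_max: "\<forall>d. feasible_occ f \<nu> H d \<longrightarrow> objective \<beta> H r dt d \<le> objective \<beta> H r dt dn"
    and V_last: "\<forall>s. V (H + 1) s = 0"
    and Q_rec: "\<forall>h\<in>{1..H}. \<forall>sa. Q h sa = r h sa + Fop f (V (h + 1)) sa"
    and V_rec: "\<forall>h\<in>{1..H}. \<forall>s. V h s =
        (real (H - h + 1) / \<beta>) *
          ln (\<Sum>a\<in>UNIV. pol (dt h) s a * exp (\<beta> / real (H - h + 1) * Q h (s, a)))"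
  shows "\<forall>h\<in>{1..H}. \<forall>s. ET (dn h) s > 0 \<longrightarrow>
           (\<exists>c. \<forall>a. pol (dn h) s a = c * (pol (dt h) s a * exp (\<beta> / real (H - h + 1) * Q h (s, a))))"
proof (cases "H = 0")
  case False
  define g where "g h = gibbs_pol (pol (dt h)) (\<beta> / real (H - h + 1)) (Q h)" for h
  note value_bound = objective_le_value[OF beta_pos _ dt_pos V_last Q_rec V_rec, folded g_def]
  have g: "\<forall>s. g h s \<in> simplex" if "h \<in> {1..H}" for h
    using dt_pos that by (simp add: g_def gibbs_pol_pos_and_in_simplex pol_pos less_imp_le)
  define d\<^sub>g where "d\<^sub>g h = joint (state_dist \<nu> f g (h - 1)) (g h)" for h
  have dg_feas: "feasible_occ f \<nu> H d\<^sub>g"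
    unfolding d\<^sub>g_def using False g by (intro rollout_feasible[OF kernel init]) auto
  moreover have "\<forall>h\<in>{1..H}. \<forall>s. 0 < ET (d\<^sub>g h) s \<longrightarrow> pol (d\<^sub>g h) s = g h s"
    using g by (simp add: d\<^sub>g_def ET_joint pol_joint)
  ultimately have "objective \<beta> H r dt d\<^sub>g = (\<Sum>s\<in>UNIV. \<nu> s * V 1 s)"
    using value_bound(2) by blast
  then have "objective \<beta> H r dt dn = (\<Sum>s\<in>UNIV. \<nu> s * V 1 s)"
    using dn_max dg_feas value_bound(1)[OF dn_feas] by (metis antisym)
  then have "\<forall>h\<in>{1..H}. \<forall>s. 0 < ET (dn h) s \<longrightarrow> pol (dn h) s = g h s"
    using value_bound(2)[OF dn_feas] by blast
  then show ?thesis
    using gibbs_pol_proportional unfolding g_def by metis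
qed simp

end
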